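(* Let $S$ be a type of shapes and, for each $s:S$, let $\mathrm{Pos}(s)$ be a type of indices with decidable equality. Let $(\beta,\beta',\oplus,\ominus)$ be a change structure on the base type, i.e. $\oplus:\beta\to\beta'\to\beta$ and $\ominus:\beta\to\beta\to\beta'$ with $x\oplus(y\ominus x)=y$ for all $x,y\in\beta$. Object types are generated by $A,B ::= \mathsf{b}\mid F_s\,A \mid A\times B\mid A+B$ (with $s:S$). Assign to each object type $A$ a value type $[\![A]\!]$, a change type $[\![A]\!]'$, an update $\oplus:[\![A]\!]\to[\![A]\!]'\to[\![A]\!]$ and a difference $\ominus:[\![A]\!]\to[\![A]\!]\to[\![A]\!]'$ recursively as follows: (i) $[\![\mathsf{b}]\!]=\beta$, $[\![\mathsf{b}]\!]'=\beta'$, with the given $\oplus,\ominus$; (ii) $[\![F_s A]\!]=\mathrm{Pos}(s)\to[\![A]\!]$, $[\![F_s A]\!]'=\mathrm{Pos}(s)\to[\![A]\!]'$, $f\oplus g=\lambda i.\,f\,i\oplus g\,i$, $f\ominus g=\lambda i.\,f\,i\ominus g\,i$; (iii) $[\![A\times B]\!]=[\![A]\!]\times[\![B]\!]$, $[\![A\times B]\!]'=[\![A]\!]'\times[\![B]\!]'$, with $\oplus,\ominus$ componentwise; (iv) $[\![A+B]\!]=[\![A]\!]+[\![B]\!]$ with injections $\iota_1,\iota_2$, and $[\![A+B]\!]'$ is the inductive type with constructors $\mathsf{cl}:[\![A]\!]'\to[\![A+B]\!]'$, $\mathsf{cr}:[\![B]\!]'\to[\![A+B]\!]'$, $\mathsf{sl}:[\![A]\!]\to[\![A+B]\!]'$,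 $\mathsf{sr}:[\![B]\!]\to[\![A+B]\!]'$, $\mathsf{null}:[\![A+B]\!]'$, where $\iota_1 x\oplus\mathsf{cl}\,x'=\iota_1(x\oplus x')$, $\iota_1x\oplus\mathsf{cr}\,y'=\iota_1x$, $\iota_2y\oplus\mathsf{cl}\,x'=\iota_2y$, $\iota_2y\oplus\mathsf{cr}\,y'=\iota_2(y\oplus y')$, $z\oplus\mathsf{sl}\,x=\iota_1x$, $z\oplus\mathsf{sr}\,y=\iota_2 y$, $z\oplus\mathsf{null}=z$, and $\iota_1x\ominus\iota_1y=\mathsf{cl}(x\ominus y)$, $\iota_1x\ominus\iota_2y=\mathsf{sl}\,x$, $\iota_2x\ominus\iota_1y=\mathsf{sr}\,x$, $\iota_2x\ominus\iota_2y=\mathsf{cr}(x\ominus y)$. Then for every object type $A$, $([\![A]\!],[\![A]\!]',\oplus,\ominus)$ is a change structure, i.e. $x\oplus(y\ominus x)=y$ for all $x,y\in[\![A]\!]$.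
   Context: A change structure consists of a type of values $V$, a type of changes $D$, an update operation $\oplus:V\to D\to V$ and a difference operation $\ominus:V\to V\to D$ satisfying the completeness law $x\oplus(y\ominus x)=y$ for all $x,y\in V$. *)

theory Defs
  imports Main
begin

datatype 's oty = TBase | TF 's "'s oty" | TProd "'s oty" "'s oty" | TSum "'s oty" "'s oty"

text \<open>Universe of semantic values. [[F_s A]] = Pos(s) -> [[A]] is represented by
  functions on the position type that are extensional (equal to VUndef outside Pos s).\<close>
datatype ('b, 'p) val =
    VB 'b
  | VF "'p \<Rightarrow> ('b, 'p) val"
  | VP "('b, 'p) val" "('b, 'p) val"
  | VL "('b, 'p) val"
  | VR "('b, 'p) val"
  | VUndef

datatype ('b, 'd, 'p) chg =
    CB 'd
  | CF "'p \<Rightarrow> ('b, 'd, 'p) chg"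
  | CP "('b, 'd, 'p) chg" "('b, 'd, 'p) chg"
  | Ccl "('b, 'd, 'p) chg"
  | Ccr "('b, 'd, 'p) chg"
  | Csl "('b, 'p) val"
  | Csr "('b, 'p) val"
  | Cnull
  | CUndef

fun has_ty :: "('s \<Rightarrow> 'p set) \<Rightarrow> 's oty \<Rightarrow> ('b, 'p) val \<Rightarrow> bool" where
  "has_ty Pos TBase v = (\<exists>b. v = VB b)"
| "has_ty Pos (TF s A) v =
     (\<exists>f. v = VF f \<and> (\<forall>i\<in>Pos s. has_ty Pos A (f i)) \<and> (\<forall>i. i \<notin> Pos s \<longrightarrow> f i = VUndef))"
| "has_ty Pos (TProd A B) v = (\<exists>x y. v = VP x y \<and> has_ty Pos A x \<and> has_ty Pos B y)"
| "has_ty Pos (TSum A B) v =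
     ((\<exists>x. v = VL x \<and> has_ty Pos A x) \<or> (\<exists>y. v = VR y \<and> has_ty Pos B y))"

text \<open>Update operation at type A (op is the base update); ill-typed inputs are
  irrelevant and return the value unchanged.\<close>
primrec upd :: "('b \<Rightarrow> 'd \<Rightarrow> 'b) \<Rightarrow> ('s \<Rightarrow> 'p set) \<Rightarrow> 's oty
             \<Rightarrow> ('b, 'p) val \<Rightarrow> ('b, 'd, 'p) chg \<Rightarrow> ('b, 'p) val" where
  "upd op Pos TBase v c =
     (case (v, c) of (VB b, CB d) \<Rightarrow> VB (op b d) | _ \<Rightarrow> v)"
| "upd op Pos (TF s A) v c =
     (case (v, c) of
        (VF f, CF g) \<Rightarrow> VF (\<lambda>i. if i \<in> Pos s then upd op Pos A (f i) (g i) else VUndef)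
      | _ \<Rightarrow> v)"
| "upd op Pos (TProd A B) v c =
     (case (v, c) of
        (VP x y, CP x' y') \<Rightarrow> VP (upd op Pos A x x') (upd op Pos B y y')
      | _ \<Rightarrow> v)"
| "upd op Pos (TSum A B) v c =
     (case c of
        Csl x \<Rightarrow> VL x
      | Csr y \<Rightarrow> VR y
      | Cnull \<Rightarrow> v
      | Ccl x' \<Rightarrow> (case v of VL x \<Rightarrow> VL (upd op Pos A x x') | VR y \<Rightarrow> VR y | _ \<Rightarrow> v)
      | Ccr y' \<Rightarrow> (case v of VL x \<Rightarrow> VL x | VR y \<Rightarrow> VR (upd op Pos B y y') | _ \<Rightarrow> v)
      | _ \<Rightarrow> v)"

primrec dif :: "('b \<Rightarrow> 'b \<Rightarrow> 'd) \<Rightarrow> ('s \<Rightarrow> 'p set) \<Rightarrow> 's oty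
             \<Rightarrow> ('b, 'p) val \<Rightarrow> ('b, 'p) val \<Rightarrow> ('b, 'd, 'p) chg" where
  "dif om Pos TBase v w =
     (case (v, w) of (VB a, VB b) \<Rightarrow> CB (om a b) | _ \<Rightarrow> CUndef)"
| "dif om Pos (TF s A) v w =
     (case (v, w) of
        (VF f, VF g) \<Rightarrow> CF (\<lambda>i. if i \<in> Pos s then dif om Pos A (f i) (g i) else CUndef)
      | _ \<Rightarrow> CUndef)"
| "dif om Pos (TProd A B) v w =
     (case (v, w) of
        (VP x y, VP x' y') \<Rightarrow> CP (dif om Pos A x x') (dif om Pos B y y')
      | _ \<Rightarrow> CUndef)"
| "dif om Pos (TSum A B) v w =
     (case (v, w) of
        (VL x, VL y) \<Rightarrow> Ccl (dif om Pos A x y)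
      | (VL x, VR y) \<Rightarrow> Csl x
      | (VR x, VL y) \<Rightarrow> Csr x
      | (VR x, VR y) \<Rightarrow> Ccr (dif om Pos B x y)
      | _ \<Rightarrow> CUndef)"

end

theory Submission
  imports Defs
begin

lemma upd_dif_cancel:
  assumes complete: "\<And>x y. oplus x (ominus y x) = y"
    and "has_ty Pos A x" and "has_ty Pos A y"
  shows "upd oplus Pos A x (dif ominus Pos A y x) = y"
  using assms(2,3)
proof (induction A arbitrary: x y)
  case TBase
  then show ?case by (auto simp: complete)
next
  case (TF s A)
  obtain f g where x: "x = VF f" "\<forall>i\<in>Pos s. has_ty Pos A (f i)"
    and y: "y = VF g" "\<forall>i\<in>Pos s. has_ty Pos A (g i)" "\<forall>i. i \<notin> Pos s \<longrightarrow> g i = VUndef"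
    using TF.prems by auto
  have pointwise: "upd oplus Pos A (f i) (dif ominus Pos A (g i) (f i)) = g i" if "i \<in> Pos s" for i
    using that x(2) y(2) TF.IH by blast
  \<comment> \<open>Outside \<open>Pos s\<close> the update yields \<open>VUndef\<close>, which agrees with \<open>g\<close> only
    because typed functions are required to be extensional.\<close>
  show ?case using x(1) y(1,3) pointwise by (auto intro!: ext)
next
  case (TProd A B)
  then show ?case by auto
next
  case (TSum A B)
  then show ?case by auto
qed

theorem lemma5p1:
  fixes oplus :: "'b \<Rightarrow> 'd \<Rightarrow> 'b" and ominus :: "'b \<Rightarrow> 'b \<Rightarrow> 'd"
    and Pos :: "'s \<Rightarrow> 'p set"
  assumes complete: "\<And>x y. oplus x (ominus y x) = y"
  shows "\<forall>x y. has_ty Pos A x \<longrightarrow> has_ty Pos A y \<longrightarrow>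
           upd oplus Pos A x (dif ominus Pos A y x) = y"
  using upd_dif_cancel[of oplus ominus, OF complete] by blast

end
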